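(* Let $\mathcal C\subseteq\mathbb F_2^n$ be a binary linear code, $\prec$ an admissible order on $[X]$, and $(N,G)$ the output of Algorithm R for $\mathcal C$ and $<_e$. Let $\to$ be one-step reduction modulo $G$ and $\overset{*}{\to}$ its reflexive-transitive closure. Then: (i) there is no infinite sequence $w_0\to w_1\to w_2\to\cdots$ (the reduction is noetherian); (ii) for any $w\in[X]$, if $w\overset{*}{\to}w_1$ and $w\overset{*}{\to}w_2$ with $w_1,w_2$ irreducible, then $w_1=w_2$; (iii) every irreducible word belongs to $N$; (iv) if $w\overset{*}{\to}w'$ then $\xi(w)=\xi(w')$.
   Context: Binary setting: $[X]$ is the free commutative monoid on $X=\{x_1,\dots,x_n\}$; $\psi:[X]\to\mathbb F_2^n$ sends $\prod x_i^{\beta_i}$ to $(\beta_i\bmod 2)_i$; $\mathcal C$ has dimension $k$ and parity check matrix $H$ ($n\times(n-k)$, $\mathcal C=\{c:cH=0\}$); syndrome $\xi(w)=\psi(w)H$. A word is standard if all exponents are $<2$; the standard form of $w$ is obtained by reducing all exponents mod 2. $\mathrm{Ind}(w)=\{i:x_i\mid w\}$. Error-vector order: $u<_e w$ iff $|\mathrm{Ind}(u)|<|\mathrm{Ind}(w)|$, or equality and $u\prec w$. Algorithm R: keep a list $L$ of words sorted increasingly by $<_e$, a set $N$ and a set $G$ of binomials; initially $L=(1)$, $N=G=\emptyset$. While $L\ne\emptyset$: remove the $<_e$-smallest $w$ from $L$; if $w$ is divisible by the leading word of some binomial of $G$, discard it; otherwise, if some $w'\in N$ has $\xi(w')=\xi(w)$,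 add the binomial $w-w'$ to $G$ with leading word $T(w-w')=w$; else add $w$ to $N$ and insert all $wx$ ($x\in X$) into $L$. Output $(N,G)$. One-step reduction modulo $G$: if $w$ is not standard, $w\to$ (standard form of $w$); if $w$ is standard and $w=us$ where $u-u'\in G$ has leading word $u$, then $w\to u's$. A word is irreducible if no one-step reduction applies to it. *)

theory Defs
  imports Main "HOL-Library.Multiset" "HOL-Library.Z2"
begin

text \<open>Words of the free commutative monoid [X] on X = {x_0,...,x_(n-1)} are represented
  as finite multisets of variable indices i < n; multiplication is multiset sum,
  the empty multiset is the word 1, and u divides w iff u is a submultiset of w.\<close>

type_synonym word = "nat multiset"

definition words :: "nat \<Rightarrow> word set" where
  "words n = {w. set_mset w \<subseteq> {..<n}}"

definition psi :: "word \<Rightarrow> nat \<Rightarrow> bit" where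
  "psi w i = of_nat (count w i)"

definition syndrome :: "nat \<Rightarrow> nat \<Rightarrow> (nat \<Rightarrow> nat \<Rightarrow> bit) \<Rightarrow> word \<Rightarrow> nat \<Rightarrow> bit" where
  "syndrome n k H w = (\<lambda>j. if j < n - k then (\<Sum>i<n. psi w i * H i j) else 0)"

definition admissible :: "nat \<Rightarrow> (word \<Rightarrow> word \<Rightarrow> bool) \<Rightarrow> bool" where
  "admissible n prec \<longleftrightarrow>
     (\<forall>u\<in>words n. \<not> prec u u) \<and>
     (\<forall>u\<in>words n. \<forall>v\<in>words n. \<forall>w\<in>words n. prec u v \<longrightarrow> prec v w \<longrightarrow> prec u w) \<and>
     (\<forall>u\<in>words n. \<forall>v\<in>words n. u = v \<or> prec u v \<or> prec v u) \<and>
     (\<forall>u\<in>words n. u \<noteq> {#} \<longrightarrow> prec {#} u) \<and>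
     (\<forall>u\<in>words n. \<forall>v\<in>words n. \<forall>s\<in>words n. prec u v \<longrightarrow> prec (u + s) (v + s)) \<and>
     wf {(u, v). u \<in> words n \<and> v \<in> words n \<and> prec u v}"

definition err_less :: "(word \<Rightarrow> word \<Rightarrow> bool) \<Rightarrow> word \<Rightarrow> word \<Rightarrow> bool" where
  "err_less prec u w \<longleftrightarrow>
     card (set_mset u) < card (set_mset w) \<or>
     (card (set_mset u) = card (set_mset w) \<and> prec u w)"

text \<open>State (L, N, G): L is the (duplicate-free, sorted)
  list of pending words represented as a finite set, G a set of binomials u - u'
  represented as pairs (u, u') with leading word u.\<close>
inductive algR_step ::
  "nat \<Rightarrow> nat \<Rightarrow> (nat \<Rightarrow> nat \<Rightarrow> bit) \<Rightarrow> (word \<Rightarrow> word \<Rightarrow> bool) \<Rightarrow>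
   word set \<times> word set \<times> (word \<times> word) set \<Rightarrow>
   word set \<times> word set \<times> (word \<times> word) set \<Rightarrow> bool"
  for n k H prec where
  discard:
    "\<lbrakk> w \<in> L; \<forall>v\<in>L. v \<noteq> w \<longrightarrow> err_less prec w v;
       \<exists>(u, u')\<in>G. u \<subseteq># w \<rbrakk>
     \<Longrightarrow> algR_step n k H prec (L, N, G) (L - {w}, N, G)"
| add_binomial:
    "\<lbrakk> w \<in> L; \<forall>v\<in>L. v \<noteq> w \<longrightarrow> err_less prec w v;
       \<not> (\<exists>(u, u')\<in>G. u \<subseteq># w);
       w' \<in> N; syndrome n k H w' = syndrome n k H w \<rbrakk>
     \<Longrightarrow> algR_step n k H prec (L, N, G) (L - {w}, N, G \<union> {(w, w')})"
| add_normal: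
    "\<lbrakk> w \<in> L; \<forall>v\<in>L. v \<noteq> w \<longrightarrow> err_less prec w v;
       \<not> (\<exists>(u, u')\<in>G. u \<subseteq># w);
       \<not> (\<exists>w'\<in>N. syndrome n k H w' = syndrome n k H w) \<rbrakk>
     \<Longrightarrow> algR_step n k H prec (L, N, G)
           ((L - {w}) \<union> {w + {#i#} | i. i < n}, N \<union> {w}, G)"

definition algR_output ::
  "nat \<Rightarrow> nat \<Rightarrow> (nat \<Rightarrow> nat \<Rightarrow> bit) \<Rightarrow> (word \<Rightarrow> word \<Rightarrow> bool) \<Rightarrow>
   word set \<Rightarrow> (word \<times> word) set \<Rightarrow> bool" where
  "algR_output n k H prec N G \<longleftrightarrow>
     (algR_step n k H prec)\<^sup>*\<^sup>* ({{#}}, {}, {}) ({}, N, G)"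

definition standard :: "word \<Rightarrow> bool" where
  "standard w \<longleftrightarrow> (\<forall>i. count w i < 2)"

definition std_form :: "word \<Rightarrow> word" where
  "std_form w = mset_set {i \<in> set_mset w. odd (count w i)}"

inductive red :: "(word \<times> word) set \<Rightarrow> word \<Rightarrow> word \<Rightarrow> bool" for G where
  to_std: "\<not> standard w \<Longrightarrow> red G w (std_form w)"
| by_G: "\<lbrakk> standard w; (u, u') \<in> G; w = u + s \<rbrakk> \<Longrightarrow> red G w (u' + s)"

definition irreducible_word :: "(word \<times> word) set \<Rightarrow> word \<Rightarrow> bool" where
  "irreducible_word G w \<longleftrightarrow> \<not> (\<exists>v. red G w v)"

end

theory Submission
  imports Defs
begin

text \<open>Algorithm R only ever adds to \<open>N\<close> a word that is \<open><\<^sub>e\<close>-smaller than everything still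
  pending and whose syndrome is new, and only adds a binomial \<open>w - w'\<close> with \<open>w' \<in> N\<close>,
  \<open>w' <\<^sub>e w\<close> and equal syndromes. Hence every reduction step preserves the syndrome and
  strictly decreases the word in the well-founded order \<open><\<^sub>e\<close>: standardisation passes to a proper
  divisor, and in a standard word \<open>u s\<close> the factors \<open>u\<close> and \<open>s\<close> have disjoint supports, so
  \<open>u' <\<^sub>e u\<close> gives \<open>u' s <\<^sub>e u s\<close>. Conversely, every word taken from \<open>L\<close> ends up in \<open>N\<close> or
  divisible by a leading word, so by induction on the degree every irreducible word lies in \<open>N\<close>.
  Two irreducible descendants of \<open>w\<close> are then elements of \<open>N\<close> with the syndrome of \<open>w\<close>, and
  syndromes are distinct on \<open>N\<close>.\<close>

lemma of_nat_bit_eq: "(of_nat m :: bit) = (if odd m then 1 else 0)"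
  by (induction m) auto

lemma psi_plus: "psi (a + b) i = psi a i + psi b i"
  by (simp add: psi_def)

lemma syndrome_plus: "syndrome n k H (a + b) = (\<lambda>j. syndrome n k H a j + syndrome n k H b j)"
  unfolding syndrome_def psi_plus distrib_right sum.distrib by auto

lemma count_std_form: "count (std_form w) i = (if odd (count w i) then 1 else 0)"
  by (auto simp: std_form_def count_mset_set' intro: count_inI)

lemma psi_std_form: "psi (std_form w) i = psi w i"
  by (simp add: psi_def count_std_form of_nat_bit_eq)

lemma syndrome_std_form: "syndrome n k H (std_form w) = syndrome n k H w"
  by (simp only: syndrome_def psi_std_form)

lemma std_form_subseteq: "std_form w \<subseteq># w"
  by (auto simp: subseteq_mset_def count_std_form dest!: odd_pos)

lemma std_form_eq_iff_standard: "std_form w = w \<longleftrightarrow> standard w"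
proof -
  have "(if odd c then 1 else 0) = c \<longleftrightarrow> c < 2" for c :: nat
    by presburger
  then show ?thesis
    by (simp add: multiset_eq_iff count_std_form standard_def)
qed

lemma disjoint_if_standard_plus:
  assumes "standard (u + s)"
  shows "set_mset u \<inter> set_mset s = {}"
proof (rule ccontr)
  assume "set_mset u \<inter> set_mset s \<noteq> {}"
  then obtain i where "i \<in># u" "i \<in># s"
    by blast
  then have "count u i \<ge> 1" "count s i \<ge> 1"
    by (simp_all add: Suc_le_eq)
  then have "count (u + s) i \<ge> 2"
    unfolding count_union by linarith
  with assms show False
    unfolding standard_def by (meson not_le)
qed

lemma words_plus_iff [simp]: "a + b \<in> words n \<longleftrightarrow> a \<in> words n \<and> b \<in> words n"
  by (auto simp: words_def)

lemma words_add_mset_iff [simp]: "add_mset i w \<in> words n \<longleftrightarrow> i < n \<and> w \<in> words n"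
  by (auto simp: words_def)

lemma empty_in_words [simp]: "{#} \<in> words n"
  by (simp add: words_def)

lemma words_subset_mset: "a \<subseteq># b \<Longrightarrow> b \<in> words n \<Longrightarrow> a \<in> words n"
  by (auto simp: words_def dest: set_mset_mono)

lemma prec_if_subset_mset:
  assumes adm: "admissible n prec" and "b \<in> words n" "a \<subset># b"
  shows "prec a b"
proof -
  have words: "a \<in> words n" "b - a \<in> words n"
    using assms(2,3) by (auto intro: words_subset_mset[of _ b])
  moreover have "b - a \<noteq> {#}"
    using \<open>a \<subset># b\<close> by (simp add: Diff_eq_empty_iff_mset subset_mset.less_le_not_le)
  ultimately have "prec {#} (b - a)"
    using adm unfolding admissible_def by blast
  then have "prec ({#} + a) ((b - a) + a)"
    using adm words unfolding admissible_def by (meson empty_in_words)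
  with \<open>a \<subset># b\<close> show ?thesis
    by (simp add: subset_mset.less_imp_le)
qed

lemma err_less_trans:
  assumes "admissible n prec" "a \<in> words n" "b \<in> words n" "c \<in> words n"
    and "err_less prec a b" "err_less prec b c"
  shows "err_less prec a c"
proof -
  have "prec a b \<Longrightarrow> prec b c \<Longrightarrow> prec a c"
    using assms(1-4) unfolding admissible_def by blast
  with assms(5,6) show ?thesis
    unfolding err_less_def by auto
qed

lemma err_less_add_mset:
  assumes adm: "admissible n prec" and "w \<in> words n" "i < n"
  shows "err_less prec w (add_mset i w)"
proof (cases "i \<in># w")
  case True
  have "prec w (add_mset i w)"
    using assms by (intro prec_if_subset_mset[OF adm]) auto
  with True show ?thesis
    by (simp add: err_less_def insert_absorb)
next
  case False
  then show ?thesis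
    by (simp add: err_less_def)
qed

lemma wf_err_less:
  assumes "admissible n prec"
  shows "wf {(a, b). a \<in> words n \<and> b \<in> words n \<and> err_less prec a b}"
proof (rule wf_subset)
  let ?prec = "{(u, v). u \<in> words n \<and> v \<in> words n \<and> prec u v}"
  show "wf (inv_image (less_than <*lex*> ?prec) (\<lambda>w. (card (set_mset w), w)))"
    using assms unfolding admissible_def by (intro wf_inv_image wf_lex_prod wf_less_than) blast
  show "{(a, b). a \<in> words n \<and> b \<in> words n \<and> err_less prec a b}
      \<subseteq> inv_image (less_than <*lex*> ?prec) (\<lambda>w. (card (set_mset w), w))"
    by (auto simp: err_less_def)
qed

lemma err_less_std_form:
  assumes "admissible n prec" "w \<in> words n" "\<not> standard w"
  shows "err_less prec (std_form w) w"
proof -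
  have "std_form w \<subset># w"
    using assms(3) std_form_subseteq std_form_eq_iff_standard
    by (simp add: subset_mset.less_le)
  then have "prec (std_form w) w"
    by (rule prec_if_subset_mset[OF assms(1,2)])
  moreover have "card (set_mset (std_form w)) \<le> card (set_mset w)"
    using std_form_subseteq by (intro card_mono) (auto dest: set_mset_mono)
  ultimately show ?thesis
    by (auto simp: err_less_def)
qed

lemma err_less_plus_disjoint:
  assumes adm: "admissible n prec" and "u' \<in> words n" "u \<in> words n" "s \<in> words n"
    and "err_less prec u' u" "set_mset u \<inter> set_mset s = {}"
  shows "err_less prec (u' + s) (u + s)"
proof -
  have card_lhs: "card (set_mset (u' + s)) \<le> card (set_mset u') + card (set_mset s)"
    by (simp add: card_Un_le)
  have card_rhs: "card (set_mset (u + s)) = card (set_mset u) + card (set_mset s)"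
    using assms(6) by (simp add: card_Un_disjoint)
  show ?thesis
  proof (cases "card (set_mset u') < card (set_mset u)")
    case True
    with card_lhs card_rhs show ?thesis
      by (simp add: err_less_def)
  next
    case False
    with assms(5) have "prec u' u" "card (set_mset u') = card (set_mset u)"
      by (auto simp: err_less_def)
    moreover from \<open>prec u' u\<close> have "prec (u' + s) (u + s)"
      using adm assms(2-4) unfolding admissible_def by blast
    ultimately show ?thesis
      using card_lhs card_rhs by (auto simp: err_less_def)
  qed
qed

lemma ex_red_iff:
  "(\<exists>v. red G w v) \<longleftrightarrow> \<not> standard w \<or> (\<exists>(u, u')\<in>G. u \<subseteq># w)"
proof
  assume "\<exists>v. red G w v"
  then obtain v where "red G w v" ..
  then show "\<not> standard w \<or> (\<exists>(u, u')\<in>G. u \<subseteq># w)"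
    by cases force+
next
  assume reducible: "\<not> standard w \<or> (\<exists>(u, u')\<in>G. u \<subseteq># w)"
  show "\<exists>v. red G w v"
  proof (cases "standard w")
    case True
    with reducible obtain u u' where "(u, u') \<in> G" "w = u + (w - u)"
      by auto
    with True show ?thesis
      by (blast intro: red.by_G)
  next
    case False
    then show ?thesis
      by (blast intro: red.to_std)
  qed
qed

lemma irreducible_word_iff:
  "irreducible_word G w \<longleftrightarrow> standard w \<and> \<not> (\<exists>(u, u')\<in>G. u \<subseteq># w)"
  by (simp add: irreducible_word_def ex_red_iff)

lemma red_syndrome:
  assumes "red G w v" and "\<forall>(u, u')\<in>G. syndrome n k H u' = syndrome n k H u"
  shows "syndrome n k H v = syndrome n k H w"
  using assms(1)
proof cases
  case to_std
  then show ?thesis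
    by (simp add: syndrome_std_form)
next
  case (by_G u u' s)
  then show ?thesis
    using assms(2) by (auto simp: syndrome_plus)
qed

lemma rtranclp_red_syndrome:
  assumes "(red G)\<^sup>*\<^sup>* w v" and "\<forall>(u, u')\<in>G. syndrome n k H u' = syndrome n k H u"
  shows "syndrome n k H w = syndrome n k H v"
  using assms by (induction rule: rtranclp_induct) (auto dest: red_syndrome)

lemma red_words:
  assumes "red G w v" "w \<in> words n" and "\<forall>(u, u')\<in>G. u' \<in> words n"
  shows "v \<in> words n"
  using assms(1)
proof cases
  case to_std
  then show ?thesis
    using assms(2) std_form_subseteq by (blast intro: words_subset_mset)
next
  case (by_G u u' s)
  then show ?thesis
    using assms(2,3) by auto
qed

lemma rtranclp_red_words:
  assumes "(red G)\<^sup>*\<^sup>* w v" "w \<in> words n" and "\<forall>(u, u')\<in>G. u' \<in> words n"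
  shows "v \<in> words n"
  using assms by (induction rule: rtranclp_induct) (auto intro: red_words)

lemma red_err_less:
  assumes adm: "admissible n prec" and "red G w v" "w \<in> words n"
    and G: "\<forall>(u, u')\<in>G. u' \<in> words n \<and> err_less prec u' u"
  shows "err_less prec v w"
  using assms(2)
proof cases
  case to_std
  then show ?thesis
    using adm assms(3) by (simp add: err_less_std_form)
next
  case (by_G u u' s)
  then show ?thesis
    using assms(3) G disjoint_if_standard_plus
    by (auto intro!: err_less_plus_disjoint[OF adm])
qed

lemma red_no_infinite_chain:
  assumes adm: "admissible n prec" and G: "\<forall>(u, u')\<in>G. u' \<in> words n \<and> err_less prec u' u"
  shows "\<nexists>f. f 0 \<in> words n \<and> (\<forall>i. red G (f i) (f (Suc i)))"
proof
  assume "\<exists>f. f 0 \<in> words n \<and> (\<forall>i. red G (f i) (f (Suc i)))"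
  then obtain f where f0: "f 0 \<in> words n" and steps: "\<And>i. red G (f i) (f (Suc i))"
    by blast
  have "\<forall>(u, u')\<in>G. u' \<in> words n"
    using G by auto
  then have words: "f i \<in> words n" for i
    by (induction i) (use f0 steps in \<open>auto intro: red_words\<close>)
  have "(f (Suc i), f i) \<in> {(a, b). a \<in> words n \<and> b \<in> words n \<and> err_less prec a b}" for i
    using words steps red_err_less[OF adm steps words G] by blast
  with wf_err_less[OF adm] show False
    unfolding wf_iff_no_infinite_down_chain by blast
qed

type_synonym algR_state = "word set \<times> word set \<times> (word \<times> word) set"

definition algR_invariant ::
  "nat \<Rightarrow> nat \<Rightarrow> (nat \<Rightarrow> nat \<Rightarrow> bit) \<Rightarrow> (word \<Rightarrow> word \<Rightarrow> bool) \<Rightarrow> algR_state \<Rightarrow> bool" where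
  "algR_invariant n k H prec = (\<lambda>(L, N, G).
     L \<subseteq> words n \<and> N \<subseteq> words n \<and> (\<forall>a\<in>N. \<forall>b\<in>L. err_less prec a b) \<and>
     inj_on (syndrome n k H) N \<and>
     (\<forall>(u, u')\<in>G. u' \<in> N \<and> err_less prec u' u \<and> syndrome n k H u' = syndrome n k H u))"

lemma algR_step_invariant:
  assumes adm: "admissible n prec" and "algR_step n k H prec s s'"
    and "algR_invariant n k H prec s"
  shows "algR_invariant n k H prec s'"
  using assms(2)
proof cases
  case (discard w L G N)
  then show ?thesis
    using assms(3) by (auto simp: algR_invariant_def)
next
  case (add_binomial w L G w' N)
  then show ?thesis
    using assms(3) by (auto simp: algR_invariant_def)
next
  case (add_normal w L G N)
  let ?L' = "L - {w} \<union> {w + {#i#} |i. i < n}"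
  have L: "L \<subseteq> words n" and N: "N \<subseteq> words n" and below: "\<forall>a\<in>N. \<forall>b\<in>L. err_less prec a b"
    and inj: "inj_on (syndrome n k H) N"
    and G: "\<forall>(u, u')\<in>G. u' \<in> N \<and> err_less prec u' u \<and> syndrome n k H u' = syndrome n k H u"
    using assms(3) add_normal(1) by (simp_all add: algR_invariant_def)
  have w: "w \<in> words n"
    using L add_normal(3) by blast
  have L': "?L' \<subseteq> words n"
    using L w by auto
  have w_below: "err_less prec w b" if "b \<in> ?L'" for b
    using that add_normal(4) err_less_add_mset[OF adm w] by auto
  have N_below: "err_less prec a b" if "a \<in> N" "b \<in> ?L'" for a b
  proof (cases "b \<in> L")
    case True
    with below that show ?thesis by blast
  next
    case False
    have "err_less prec a w"
      using below that(1) add_normal(3) by blast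
    with that False show ?thesis
      using w_below L' N by (blast intro: err_less_trans[OF adm _ w])
  qed
  have "inj_on (syndrome n k H) (insert w N)"
    using inj add_normal(6) by (auto simp: inj_on_insert)
  with add_normal(2) L' N w w_below N_below G show ?thesis
    by (auto simp: algR_invariant_def)
qed

lemma algR_run_invariant:
  assumes "admissible n prec" and "(algR_step n k H prec)\<^sup>*\<^sup>* ({{#}}, {}, {}) s"
  shows "algR_invariant n k H prec s"
  using assms(2)
proof (induction rule: rtranclp_induct)
  case base
  show ?case
    by (simp add: algR_invariant_def)
next
  case (step s s')
  with algR_step_invariant[OF assms(1)] show ?case
    by blast
qed

lemma algR_output_invariant:
  assumes "admissible n prec" and "algR_output n k H prec N G"
  shows "N \<subseteq> words n" "inj_on (syndrome n k H) N"
    and "\<forall>(u, u')\<in>G. u' \<in> N \<and> err_less prec u' u \<and> syndrome n k H u' = syndrome n k H u"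
  using algR_run_invariant[OF assms(1) assms(2)[unfolded algR_output_def]]
  by (simp_all add: algR_invariant_def)

definition covered :: "word set \<Rightarrow> (word \<times> word) set \<Rightarrow> word \<Rightarrow> bool" where
  "covered N G w \<longleftrightarrow> w \<in> N \<or> (\<exists>(u, u')\<in>G. u \<subseteq># w)"

lemma mem_if_no_leading_word_divides:
  assumes "covered N G {#}" and "\<forall>v\<in>N. \<forall>i<n. covered N G (add_mset i v)"
    and "w \<in> words n" "\<not> (\<exists>(u, u')\<in>G. u \<subseteq># w)"
  shows "w \<in> N"
  using assms(3,4)
proof (induction w)
  case empty
  with assms(1) show ?case
    by (simp add: covered_def)
next
  case (add i w)
  have "w \<subseteq># add_mset i w"
    by simp
  with add.prems(2) have "\<not> (\<exists>(u, u')\<in>G. u \<subseteq># w)"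
    by (blast intro: subset_mset.order_trans)
  with add.prems(1) have "w \<in> N"
    by (auto intro: add.IH)
  with assms(2) add.prems show ?case
    by (auto simp: covered_def)
qed

text \<open>An invariant of a run read backwards from its final state \<open>({}, Nf, Gf)\<close>: a word that
  leaves \<open>L\<close> is discarded only when a leading word divides it, and otherwise enters \<open>Nf\<close>.\<close>

definition algR_coverage :: "nat \<Rightarrow> word set \<Rightarrow> (word \<times> word) set \<Rightarrow> algR_state \<Rightarrow> bool" where
  "algR_coverage n Nf Gf = (\<lambda>(L, N, G).
     N \<subseteq> Nf \<and> G \<subseteq> Gf \<and> (\<forall>w\<in>L. covered Nf Gf w) \<and>
     (\<forall>v\<in>Nf - N. \<forall>i<n. covered Nf Gf (add_mset i v)))"

lemma algR_step_coverage:
  assumes "algR_step n k H prec s s'" and "algR_coverage n Nf Gf s'"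
  shows "algR_coverage n Nf Gf s"
  using assms(1)
proof cases
  case (discard w L G N)
  moreover have "covered Nf Gf w"
    using discard assms(2) by (force simp: algR_coverage_def covered_def)
  ultimately show ?thesis
    using assms(2) by (auto simp: algR_coverage_def)
next
  case (add_binomial w L G w' N)
  moreover have "covered Nf Gf w"
    using add_binomial assms(2) by (auto simp: algR_coverage_def covered_def)
  ultimately show ?thesis
    using assms(2) by (auto simp: algR_coverage_def)
next
  case (add_normal w L G N)
  moreover have "covered Nf Gf w"
    using add_normal assms(2) by (auto simp: algR_coverage_def covered_def)
  ultimately show ?thesis
    using assms(2) by (auto simp: algR_coverage_def)
qed

lemma algR_run_coverage:
  assumes "(algR_step n k H prec)\<^sup>*\<^sup>* s ({}, Nf, Gf)"
  shows "algR_coverage n Nf Gf s"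
  using assms
proof (induction rule: converse_rtranclp_induct)
  case base
  show ?case
    by (simp add: algR_coverage_def)
next
  case (step s s')
  then show ?case
    by (blast intro: algR_step_coverage)
qed

lemma algR_output_irreducible_mem:
  assumes "algR_output n k H prec N G" "w \<in> words n" "irreducible_word G w"
  shows "w \<in> N"
proof -
  have "algR_coverage n N G ({{#}}, {}, {})"
    using assms(1) unfolding algR_output_def by (rule algR_run_coverage)
  then have "covered N G {#}" "\<forall>v\<in>N. \<forall>i<n. covered N G (add_mset i v)"
    by (simp_all add: algR_coverage_def)
  with assms(2,3) show ?thesis
    by (simp add: irreducible_word_iff mem_if_no_leading_word_divides)
qed

lemma algR_output_normal_form_unique:
  assumes adm: "admissible n prec" and alg: "algR_output n k H prec N G"
    and "w \<in> words n" "(red G)\<^sup>*\<^sup>* w w1" "(red G)\<^sup>*\<^sup>* w w2"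
    and "irreducible_word G w1" "irreducible_word G w2"
  shows "w1 = w2"
proof -
  note N = algR_output_invariant[OF adm alg]
  have G_words: "\<forall>(u, u')\<in>G. u' \<in> words n"
    using N(1,3) by auto
  have G_syndrome: "\<forall>(u, u')\<in>G. syndrome n k H u' = syndrome n k H u"
    using N(3) by auto
  have "w1 \<in> N" "w2 \<in> N"
    using assms(3-7) rtranclp_red_words[OF _ _ G_words]
    by (auto intro: algR_output_irreducible_mem[OF alg])
  moreover have "syndrome n k H w1 = syndrome n k H w2"
    using rtranclp_red_syndrome[OF assms(4) G_syndrome] rtranclp_red_syndrome[OF assms(5) G_syndrome]
    by simp
  ultimately show ?thesis
    using N(2) by (auto dest: inj_onD)
qed

theorem theorem3p5:
  fixes n k :: nat
    and H :: "nat \<Rightarrow> nat \<Rightarrow> bit"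
    and C :: "(nat \<Rightarrow> bit) set"
    and prec :: "word \<Rightarrow> word \<Rightarrow> bool"
    and N :: "word set" and G :: "(word \<times> word) set"
  assumes "k \<le> n"
    and "C = {c. (\<forall>i\<ge>n. c i = 0) \<and> (\<forall>j<n - k. (\<Sum>i<n. c i * H i j) = 0)}"
    and "card C = 2 ^ k"
    and "admissible n prec"
    and "algR_output n k H prec N G"
  shows "(\<nexists>f. f 0 \<in> words n \<and> (\<forall>i. red G (f i) (f (Suc i))))
    \<and> (\<forall>w\<in>words n. \<forall>w1 w2. (red G)\<^sup>*\<^sup>* w w1 \<longrightarrow> (red G)\<^sup>*\<^sup>* w w2
          \<longrightarrow> irreducible_word G w1 \<longrightarrow> irreducible_word G w2 \<longrightarrow> w1 = w2)
    \<and> (\<forall>w\<in>words n. irreducible_word G w \<longrightarrow> w \<in> N)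
    \<and> (\<forall>w\<in>words n. \<forall>w'. (red G)\<^sup>*\<^sup>* w w' \<longrightarrow> syndrome n k H w = syndrome n k H w')"
proof -
  \<comment> \<open>Neither the code \<open>C\<close> nor the rank of \<open>H\<close> matters: the argument works for any matrix \<open>H\<close>.\<close>
  note adm = assms(4) and alg = assms(5)
  note N = algR_output_invariant[OF adm alg]
  have G_decreasing: "\<forall>(u, u')\<in>G. u' \<in> words n \<and> err_less prec u' u"
    using N(1,3) by auto
  have G_syndrome: "\<forall>(u, u')\<in>G. syndrome n k H u' = syndrome n k H u"
    using N(3) by auto
  show ?thesis
    using red_no_infinite_chain[OF adm G_decreasing]
      algR_output_normal_form_unique[OF adm alg]
      algR_output_irreducible_mem[OF alg]
      rtranclp_red_syndrome[OF _ G_syndrome]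
    by blast
qed

end
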